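(* Let $\mathcal{G}=([N],[M],\mathsf{E})$ be an $(N,M,D,K,A)$-bipartite expander with $2A\ge D$, and let $\mathbf{H}_M$ be a Hadamard matrix of order $M$. Let $\mathbf{Q}\in\mathbb{R}^{MD\times N}$ be the pooling matrix constructed from $\mathcal{G}$ and $\mathbf{H}_M$ (as described in the context). Then for every $\bm{z}\in\{0,\pm1\}^N$ with $\lVert\bm{z}\rVert_0\le K$, \[ \lVert\mathbf{Q}\bm{z}\rVert_2^2\ \ge\ M(2A-D)\,\lVert\bm{z}\rVert_0, \qquad\text{and consequently}\qquad \lVert\mathbf{Q}\bm{z}\rVert_\infty\ \ge\ \sqrt{\tfrac{2A-D}{D}\,\lVert\bm{z}\rVert_0}. \]
   Context: A bipartite graph $\mathcal{G}=(\mathsf{L},\mathsf{R},\mathsf{E})$ with $\mathsf{L}=[N]=\{1,\dots,N\}$, $\mathsf{R}=[M]$ and edge set $\mathsf{E}\subseteq[N]\times[M]$ is left-$D$-regular if every left vertex $i$ has exactly $D$ neighbours; $\Gamma(i)$ denotes the set of neighbours of $i$ and $\Gamma(S)=\bigcup_{i\in S}\Gamma(i)$. It is an $(N,M,D,K,A)$-bipartite expander if it is left-$D$-regular and $|\Gamma(S)|\ge A|S|$ for every $S\subseteq[N]$ with $|S|\le K$. The induced matrix $\mathbf{B}_{\mathcal{G}}\in\{0,1\}^{M\times N}$ has $(j,i)$-entry $1$ iff $(i,j)\in\mathsf{E}$ (so each column has exactly $D$ ones). A Hadamard matrix of order $M$ is an $M\times M$ matrix $\mathbf{H}_M$ with entries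 $\pm1$ and $\mathbf{H}_M^{\intercal}\mathbf{H}_M=M\mathbf{I}$. Construction of $\mathbf{Q}$: write $\mathbf{B}_{\mathcal{G}}=\sum_{i=1}^D\mathbf{B}_i$ with each $\mathbf{B}_i\in\{0,1\}^{M\times N}$ having exactly one nonzero entry in each column (i.e. distribute the $D$ ones of each column among the $D$ matrices, one each); set $\mathbf{D}_i=\mathbf{H}_M\mathbf{B}_i$ and $\mathbf{Q}=\begin{bmatrix}\mathbf{D}_1\\ \vdots\\ \mathbf{D}_D\end{bmatrix}$. $\lVert\cdot\rVert_0$ counts nonzero entries. *)

theory Defs
  imports Complex_Main
begin

text \<open>Matrices are functions nat \<Rightarrow> nat \<Rightarrow> real,
 indexed from 1 (row index first).\<close>

definition nbhd :: "(nat \<times> nat) set \<Rightarrow> nat set \<Rightarrow> nat set" where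
  "nbhd E S = {j. \<exists>i\<in>S. (i, j) \<in> E}"

definition left_regular :: "nat \<Rightarrow> nat \<Rightarrow> nat \<Rightarrow> (nat \<times> nat) set \<Rightarrow> bool" where
  "left_regular N M D E \<longleftrightarrow> E \<subseteq> {1..N} \<times> {1..M} \<and>
     (\<forall>i\<in>{1..N}. card (nbhd E {i}) = D)"

definition bipartite_expander ::
  "nat \<Rightarrow> nat \<Rightarrow> nat \<Rightarrow> nat \<Rightarrow> real \<Rightarrow> (nat \<times> nat) set \<Rightarrow> bool" where
  "bipartite_expander N M D K A E \<longleftrightarrow> left_regular N M D E \<and>
     (\<forall>S. S \<subseteq> {1..N} \<and> card S \<le> K \<longrightarrow> real (card (nbhd E S)) \<ge> A * real (card S))"

definition induced_matrix :: "(nat \<times> nat) set \<Rightarrow> nat \<Rightarrow> nat \<Rightarrow> real" where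
  "induced_matrix E j i = (if (i, j) \<in> E then 1 else 0)"

definition hadamard :: "nat \<Rightarrow> (nat \<Rightarrow> nat \<Rightarrow> real) \<Rightarrow> bool" where
  "hadamard M H \<longleftrightarrow> (\<forall>j\<in>{1..M}. \<forall>k\<in>{1..M}. H j k = 1 \<or> H j k = -1) \<and>
     (\<forall>i\<in>{1..M}. \<forall>k\<in>{1..M}.
        (\<Sum>j=1..M. H j i * H j k) = (if i = k then real M else 0))"

definition valid_split ::
  "nat \<Rightarrow> nat \<Rightarrow> nat \<Rightarrow> (nat \<times> nat) set \<Rightarrow> (nat \<Rightarrow> nat \<Rightarrow> nat \<Rightarrow> real) \<Rightarrow> bool" where
  "valid_split N M D E B \<longleftrightarrow>
     (\<forall>l\<in>{1..D}. \<forall>j\<in>{1..M}. \<forall>i\<in>{1..N}. B l j i = 0 \<or> B l j i = 1) \<and>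
     (\<forall>l\<in>{1..D}. \<forall>i\<in>{1..N}. card {j\<in>{1..M}. B l j i \<noteq> 0} = 1) \<and>
     (\<forall>j\<in>{1..M}. \<forall>i\<in>{1..N}. (\<Sum>l=1..D. B l j i) = induced_matrix E j i)"

text \<open>Pooling matrix Q (MD x N): row (l-1)*M + j of Q is row j of D_l = H_M B_l.\<close>
definition pooling_matrix ::
  "nat \<Rightarrow> (nat \<Rightarrow> nat \<Rightarrow> real) \<Rightarrow> (nat \<Rightarrow> nat \<Rightarrow> nat \<Rightarrow> real) \<Rightarrow> nat \<Rightarrow> nat \<Rightarrow> real" where
  "pooling_matrix M H B r i =
     (let l = (r - 1) div M + 1; j = (r - 1) mod M + 1 in (\<Sum>k=1..M. H j k * B l k i))"

definition mat_vec :: "nat \<Rightarrow> (nat \<Rightarrow> nat \<Rightarrow> real) \<Rightarrow> (nat \<Rightarrow> real) \<Rightarrow> nat \<Rightarrow> real" where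
  "mat_vec N Q z r = (\<Sum>i=1..N. Q r i * z i)"

definition l0_norm :: "nat \<Rightarrow> (nat \<Rightarrow> real) \<Rightarrow> nat" where
  "l0_norm N z = card {i\<in>{1..N}. z i \<noteq> 0}"

definition l2_norm_sq :: "nat \<Rightarrow> (nat \<Rightarrow> real) \<Rightarrow> real" where
  "l2_norm_sq n y = (\<Sum>r=1..n. (y r)^2)"

definition linf_norm :: "nat \<Rightarrow> (nat \<Rightarrow> real) \<Rightarrow> real" where
  "linf_norm n y = Max (insert 0 ((\<lambda>r. \<bar>y r\<bar>) ` {1..n}))"

end

theory Submission
  imports Defs
begin

text \<open>Each block \<open>D\<^sub>l z = H\<^sub>M (B\<^sub>l z)\<close> of \<open>Q z\<close> has squared norm \<open>M |B\<^sub>l z|\<^sup>2\<close>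
  because \<open>H\<^sub>M / sqrt M\<close> is orthogonal. If a right vertex \<open>k\<close> has exactly one neighbour
  \<open>i\<close> in the support \<open>S\<close> of \<open>z\<close>, the edge \<open>(i, k)\<close> lies in exactly one \<open>B\<^sub>l\<close>, so the
  \<open>k\<close>-th entries of the vectors \<open>B\<^sub>l z\<close> contribute \<open>z\<^sub>i\<^sup>2 = 1\<close> in total. Double counting
  the \<open>D |S|\<close> edges leaving \<open>S\<close> shows that at least \<open>2 |\<Gamma>(S)| - D |S| \<ge> (2A - D) |S|\<close>
  right vertices are such unique neighbours. The sup-norm bound follows from
  \<open>|Q z|\<^sup>2 \<le> MD |Q z|\<^sub>\<infinity>\<^sup>2\<close>.\<close>

lemma sum_consecutive_blocks:
  fixes g :: "nat \<Rightarrow> 'a::comm_monoid_add"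
  shows "(\<Sum>r=1..M*D. g r) = (\<Sum>l=1..D. \<Sum>j=1..M. g ((l-1)*M + j))"
proof (induction D)
  case 0
  show ?case by simp
next
  case (Suc D)
  have "{1..M*Suc D} = {1..M*D} \<union> {1+M*D..M+M*D}" by auto
  then have "(\<Sum>r=1..M*Suc D. g r) = (\<Sum>r=1..M*D. g r) + (\<Sum>r=1+M*D..M+M*D. g r)"
    by (simp add: sum.union_disjoint)
  also have "(\<Sum>r=1+M*D..M+M*D. g r) = (\<Sum>j=1..M. g (j + M*D))"
    by (rule sum.shift_bounds_cl_nat_ivl)
  finally show ?case using Suc by (simp add: add.commute mult.commute)
qed

lemma hadamard_sum_sq:
  assumes "hadamard M H"
  shows "(\<Sum>j=1..M. (\<Sum>k=1..M. H j k * y k)\<^sup>2) = real M * (\<Sum>k=1..M. (y k)\<^sup>2)"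
proof -
  have "(\<Sum>j=1..M. (\<Sum>k=1..M. H j k * y k)\<^sup>2)
      = (\<Sum>j=1..M. \<Sum>k=1..M. \<Sum>k'=1..M. y k * y k' * (H j k * H j k'))"
    by (simp add: power2_eq_square sum_product mult_ac)
  also have "\<dots> = (\<Sum>k=1..M. \<Sum>k'=1..M. \<Sum>j=1..M. y k * y k' * (H j k * H j k'))"
    by (subst sum.swap) (rule sum.cong[OF refl], rule sum.swap)
  also have "\<dots> = (\<Sum>k=1..M. \<Sum>k'=1..M. y k * y k' * (\<Sum>j=1..M. H j k * H j k'))"
    by (simp add: sum_distrib_left)
  also have "\<dots> = (\<Sum>k=1..M. \<Sum>k'=1..M. if k = k' then y k * y k' * real M else 0)"
    using assms unfolding hadamard_def by (intro sum.cong refl) auto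
  finally show ?thesis by (simp add: sum_distrib_left power2_eq_square mult_ac)
qed

lemma pooling_matrix_block_row:
  assumes "l \<ge> 1" and "j \<in> {1..M}"
  shows "pooling_matrix M H B ((l-1)*M + j) i = (\<Sum>k=1..M. H j k * B l k i)"
proof -
  have "(l-1)*M + j - 1 = (j-1) + (l-1)*M" using assms(2) by simp
  moreover have "j - 1 < M" using assms(2) by auto
  ultimately have "((l-1)*M + j - 1) div M = l - 1" and "((l-1)*M + j - 1) mod M = j - 1"
    by simp_all
  then show ?thesis using assms unfolding pooling_matrix_def Let_def by simp
qed

lemma l2_norm_sq_pooling:
  assumes "hadamard M H"
  shows "l2_norm_sq (M*D) (mat_vec N (pooling_matrix M H B) z)
           = real M * (\<Sum>l=1..D. \<Sum>k=1..M. (\<Sum>i=1..N. B l k i * z i)\<^sup>2)"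
proof -
  have block: "mat_vec N (pooling_matrix M H B) z ((l-1)*M + j)
                 = (\<Sum>k=1..M. H j k * (\<Sum>i=1..N. B l k i * z i))"
    if "l \<in> {1..D}" and "j \<in> {1..M}" for l j
  proof -
    have "pooling_matrix M H B ((l-1)*M + j) i = (\<Sum>k=1..M. H j k * B l k i)" for i
      using that by (intro pooling_matrix_block_row) auto
    then have "mat_vec N (pooling_matrix M H B) z ((l-1)*M + j)
            = (\<Sum>i=1..N. \<Sum>k=1..M. H j k * (B l k i * z i))"
      unfolding mat_vec_def by (simp add: sum_distrib_right mult.assoc)
    also have "\<dots> = (\<Sum>k=1..M. \<Sum>i=1..N. H j k * (B l k i * z i))"
      by (rule sum.swap)
    finally show ?thesis by (simp add: sum_distrib_left)
  qed
  have "l2_norm_sq (M*D) (mat_vec N (pooling_matrix M H B) z)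
          = (\<Sum>l=1..D. \<Sum>j=1..M. (\<Sum>k=1..M. H j k * (\<Sum>i=1..N. B l k i * z i))\<^sup>2)"
    unfolding l2_norm_sq_def sum_consecutive_blocks
    by (intro sum.cong refl arg_cong[where f = "\<lambda>x. x\<^sup>2"] block) auto
  also have "\<dots> = (\<Sum>l=1..D. real M * (\<Sum>k=1..M. (\<Sum>i=1..N. B l k i * z i)\<^sup>2))"
    by (intro sum.cong refl hadamard_sum_sq[OF assms])
  finally show ?thesis by (simp add: sum_distrib_left)
qed

definition unique_nbhd :: "(nat \<times> nat) set \<Rightarrow> nat set \<Rightarrow> nat set" where
  "unique_nbhd E S = {k. card {i\<in>S. (i, k) \<in> E} = 1}"

lemma unique_nbhd_subset_nbhd:
  assumes "finite S"
  shows "unique_nbhd E S \<subseteq> nbhd E S"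
proof
  fix k assume "k \<in> unique_nbhd E S"
  then have "{i\<in>S. (i, k) \<in> E} \<noteq> {}" unfolding unique_nbhd_def by fastforce
  then show "k \<in> nbhd E S" unfolding nbhd_def by blast
qed

lemma sum_card_edges_nbhd:
  assumes "finite S" and "finite (nbhd E S)"
  shows "(\<Sum>k\<in>nbhd E S. card {i\<in>S. (i, k) \<in> E}) = (\<Sum>i\<in>S. card (nbhd E {i}))"
proof -
  let ?G = "nbhd E S"
  have "(\<Sum>k\<in>?G. card {i\<in>S. (i, k) \<in> E}) = (\<Sum>k\<in>?G. \<Sum>i\<in>S. if (i, k) \<in> E then 1 else 0)"
    using assms(1) by (intro sum.cong refl) (simp add: sum.inter_filter[symmetric])
  also have "\<dots> = (\<Sum>i\<in>S. \<Sum>k\<in>?G. if (i, k) \<in> E then 1 else 0)"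
    by (rule sum.swap)
  also have "\<dots> = (\<Sum>i\<in>S. card {k\<in>?G. (i, k) \<in> E})"
    using assms(2) by (intro sum.cong refl) (simp add: sum.inter_filter[symmetric])
  also have "\<dots> = (\<Sum>i\<in>S. card (nbhd E {i}))"
    by (intro sum.cong refl arg_cong[where f = card]) (auto simp: nbhd_def)
  finally show ?thesis .
qed

text \<open>Every neighbour of \<open>S\<close> receives at least one edge from \<open>S\<close>, and every neighbour
  that is not unique receives at least two.\<close>

lemma card_nbhd_le_unique_nbhd:
  assumes "finite S" and "finite (nbhd E S)" and "\<forall>i\<in>S. card (nbhd E {i}) = D"
  shows "2 * card (nbhd E S) \<le> card (unique_nbhd E S) + D * card S"
proof -
  let ?G = "nbhd E S" and ?U = "unique_nbhd E S" and ?c = "\<lambda>k. card {i\<in>S. (i, k) \<in> E}"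
  have "2 \<le> ?c k + (if k \<in> ?U then 1 else 0)" if "k \<in> ?G" for k
  proof -
    from that have "{i\<in>S. (i, k) \<in> E} \<noteq> {}" unfolding nbhd_def by blast
    then have "?c k \<noteq> 0" using assms(1) by simp
    then show ?thesis unfolding unique_nbhd_def by auto
  qed
  then have "(\<Sum>k\<in>?G. 2) \<le> (\<Sum>k\<in>?G. ?c k + (if k \<in> ?U then 1 else 0))"
    by (rule sum_mono)
  then have "2 * card ?G \<le> (\<Sum>k\<in>?G. ?c k) + (\<Sum>k\<in>?G. if k \<in> ?U then 1 else 0)"
    by (simp add: sum.distrib mult.commute)
  also have "(\<Sum>k\<in>?G. if k \<in> ?U then 1 else 0) = card ?U"
  proof -
    have "{k\<in>?G. k \<in> ?U} = ?U" using unique_nbhd_subset_nbhd[OF assms(1)] by blast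
    then show ?thesis using assms(2) by (simp add: sum.inter_filter[symmetric])
  qed
  also have "(\<Sum>k\<in>?G. ?c k) = D * card S"
    using assms by (simp add: sum_card_edges_nbhd)
  finally show ?thesis by simp
qed

lemma valid_split_nonedge_eq_0:
  assumes "valid_split N M D E B" and "l \<in> {1..D}" "j \<in> {1..M}" "i \<in> {1..N}"
    and "(i, j) \<notin> E"
  shows "B l j i = 0"
proof -
  have "\<forall>l'\<in>{1..D}. B l' j i = 0 \<or> B l' j i = 1"
    and "(\<Sum>l'=1..D. B l' j i) = induced_matrix E j i"
    using assms(1,3,4) unfolding valid_split_def by blast+
  then have "\<forall>l'\<in>{1..D}. 0 \<le> B l' j i" and "(\<Sum>l'=1..D. B l' j i) = 0"
    using assms(5) unfolding induced_matrix_def by auto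
  then show ?thesis using assms(2) by (subst (asm) sum_nonneg_eq_0_iff) auto
qed

lemma valid_split_unique_nbr_sum_sq:
  assumes split: "valid_split N M D E B" and k: "k \<in> {1..M}"
    and i0: "i0 \<in> {1..N}" "(i0, k) \<in> E"
    and others: "\<forall>i\<in>{1..N}. i \<noteq> i0 \<and> (i, k) \<in> E \<longrightarrow> z i = 0"
  shows "(\<Sum>l=1..D. (\<Sum>i=1..N. B l k i * z i)\<^sup>2) = (z i0)\<^sup>2"
proof -
  have entry: "(\<Sum>i=1..N. B l k i * z i) = B l k i0 * z i0" if l: "l \<in> {1..D}" for l
  proof -
    have "\<forall>i\<in>{1..N} - {i0}. B l k i * z i = 0"
      using valid_split_nonedge_eq_0[OF split l k] others by fastforce
    then show ?thesis using i0(1) by (simp add: sum.remove[of _ i0] sum.neutral)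
  qed
  have "(\<Sum>l=1..D. (\<Sum>i=1..N. B l k i * z i)\<^sup>2) = (\<Sum>l=1..D. B l k i0 * (z i0)\<^sup>2)"
  proof (intro sum.cong refl)
    fix l assume l: "l \<in> {1..D}"
    then have "B l k i0 = 0 \<or> B l k i0 = 1"
      using split k i0(1) unfolding valid_split_def by blast
    then show "(\<Sum>i=1..N. B l k i * z i)\<^sup>2 = B l k i0 * (z i0)\<^sup>2"
      using entry[OF l] by (auto simp: power_mult_distrib)
  qed
  also have "\<dots> = (\<Sum>l=1..D. B l k i0) * (z i0)\<^sup>2"
    by (simp add: sum_distrib_right)
  also have "(\<Sum>l=1..D. B l k i0) = 1"
    using split k i0 unfolding valid_split_def induced_matrix_def by simp
  finally show ?thesis by simp
qed

lemma card_unique_nbhd_support_le: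
  assumes E: "E \<subseteq> {1..N} \<times> {1..M}" and split: "valid_split N M D E B"
    and z: "\<forall>i\<in>{1..N}. z i \<in> {-1, 0, 1}"
  shows "real (card (unique_nbhd E {i\<in>{1..N}. z i \<noteq> 0}))
           \<le> (\<Sum>l=1..D. \<Sum>k=1..M. (\<Sum>i=1..N. B l k i * z i)\<^sup>2)"
proof -
  define S where "S = {i\<in>{1..N}. z i \<noteq> 0}"
  let ?U = "unique_nbhd E S" and ?e = "\<lambda>k. \<Sum>l=1..D. (\<Sum>i=1..N. B l k i * z i)\<^sup>2"
  have unique: "k \<in> {1..M} \<and> ?e k = 1" if "k \<in> ?U" for k
  proof -
    from that have "card {i\<in>S. (i, k) \<in> E} = 1" unfolding unique_nbhd_def by simp
    then obtain i0 where i0: "{i\<in>S. (i, k) \<in> E} = {i0}" by (rule card_1_singletonE)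
    then have "i0 \<in> {1..N}" "(i0, k) \<in> E" "z i0 \<noteq> 0" unfolding S_def by auto
    moreover from this have "k \<in> {1..M}" and "(z i0)\<^sup>2 = 1" using E z by force+
    moreover have "\<forall>i\<in>{1..N}. i \<noteq> i0 \<and> (i, k) \<in> E \<longrightarrow> z i = 0"
      using i0 unfolding S_def by blast
    ultimately show ?thesis using valid_split_unique_nbr_sum_sq[OF split] by simp
  qed
  then have "real (card ?U) = (\<Sum>k\<in>?U. ?e k)" by simp
  also have "\<dots> \<le> (\<Sum>k=1..M. ?e k)"
    using unique by (intro sum_mono2) (auto intro: sum_nonneg)
  also have "\<dots> = (\<Sum>l=1..D. \<Sum>k=1..M. (\<Sum>i=1..N. B l k i * z i)\<^sup>2)"
    by (rule sum.swap)
  finally show ?thesis unfolding S_def .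
qed

lemma left_regular_degree_le:
  assumes "left_regular N M D E" and "i \<in> {1..N}"
  shows "D \<le> M"
proof -
  have "nbhd E {i} \<subseteq> {1..M}" and "card (nbhd E {i}) = D"
    using assms unfolding left_regular_def nbhd_def by auto
  then show ?thesis using card_mono[of "{1..M}" "nbhd E {i}"] by simp
qed

lemma pooling_l2_norm_sq_ge:
  assumes expander: "bipartite_expander N M D K A E" and "hadamard M H"
    and split: "valid_split N M D E B" and z: "\<forall>i\<in>{1..N}. z i \<in> {-1, 0, 1}"
    and sparse: "l0_norm N z \<le> K"
  shows "real M * (2 * A - real D) * real (l0_norm N z)
           \<le> l2_norm_sq (M * D) (mat_vec N (pooling_matrix M H B) z)"
proof -
  define S where "S = {i\<in>{1..N}. z i \<noteq> 0}"
  have s: "l0_norm N z = card S" unfolding S_def l0_norm_def ..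
  have E: "E \<subseteq> {1..N} \<times> {1..M}" and regular: "\<forall>i\<in>S. card (nbhd E {i}) = D"
    using expander unfolding bipartite_expander_def left_regular_def S_def by auto
  have "nbhd E S \<subseteq> {1..M}" using E unfolding nbhd_def by auto
  then have finite_nbhd: "finite (nbhd E S)" by (rule finite_subset) simp
  have "S \<subseteq> {1..N}" and "card S \<le> K" using sparse unfolding s S_def by auto
  then have "A * real (card S) \<le> real (card (nbhd E S))"
    using expander unfolding bipartite_expander_def by blast
  moreover have "2 * real (card (nbhd E S)) \<le> real (card (unique_nbhd E S)) + real D * real (card S)"
    using of_nat_mono[OF card_nbhd_le_unique_nbhd[OF _ finite_nbhd regular]] unfolding S_def
    by simp
  moreover have "real (card (unique_nbhd E S))
                   \<le> (\<Sum>l=1..D. \<Sum>k=1..M. (\<Sum>i=1..N. B l k i * z i)\<^sup>2)"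
    using card_unique_nbhd_support_le[OF E split z] unfolding S_def .
  ultimately have "(2 * A - real D) * real (card S)
                     \<le> (\<Sum>l=1..D. \<Sum>k=1..M. (\<Sum>i=1..N. B l k i * z i)\<^sup>2)"
    by (simp add: algebra_simps)
  then show ?thesis
    unfolding s l2_norm_sq_pooling[OF \<open>hadamard M H\<close>] mult.assoc
    by (rule mult_left_mono) simp
qed

lemma linf_norm_nonneg: "0 \<le> linf_norm n y"
  unfolding linf_norm_def by simp

lemma l2_norm_sq_le_linf_norm: "l2_norm_sq n y \<le> real n * (linf_norm n y)\<^sup>2"
proof -
  have "(y r)\<^sup>2 \<le> (linf_norm n y)\<^sup>2" if "r \<in> {1..n}" for r
  proof -
    have "\<bar>y r\<bar> \<le> linf_norm n y" unfolding linf_norm_def using that by (intro Max_ge) auto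
    then show ?thesis by (metis abs_ge_zero power2_abs power_mono)
  qed
  then show ?thesis unfolding l2_norm_sq_def
    using sum_bounded_above[of "{1..n}" "\<lambda>r. (y r)\<^sup>2"] by simp
qed

theorem mainTheorem2:
  fixes N M D K :: nat and A :: real and E :: "(nat \<times> nat) set"
    and H :: "nat \<Rightarrow> nat \<Rightarrow> real" and B :: "nat \<Rightarrow> nat \<Rightarrow> nat \<Rightarrow> real"
    and z :: "nat \<Rightarrow> real"
  assumes "bipartite_expander N M D K A E"
    and "2 * A \<ge> real D"
    and "hadamard M H"
    and "valid_split N M D E B"
    and "\<forall>i\<in>{1..N}. z i \<in> {-1, 0, 1}"
    and "l0_norm N z \<le> K"
  shows "l2_norm_sq (M * D) (mat_vec N (pooling_matrix M H B) z)
           \<ge> real M * (2 * A - real D) * real (l0_norm N z)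
     \<and> linf_norm (M * D) (mat_vec N (pooling_matrix M H B) z)
           \<ge> sqrt ((2 * A - real D) / real D * real (l0_norm N z))"
proof -
  define v where "v = mat_vec N (pooling_matrix M H B) z"
  define L where "L = linf_norm (M * D) v"
  let ?s = "l0_norm N z"
  have l2: "real M * (2 * A - real D) * real ?s \<le> l2_norm_sq (M * D) v"
    unfolding v_def using pooling_l2_norm_sq_ge assms(1,3-6) .
  have "(2 * A - real D) / real D * real ?s \<le> L\<^sup>2"
  proof (cases "D = 0 \<or> ?s = 0")
    case False
    then obtain i where "i \<in> {1..N}"
      unfolding l0_norm_def by (metis (no_types, lifting) card.empty empty_Collect_eq)
    with False have "0 < D" "D \<le> M"
      using assms(1) left_regular_degree_le unfolding bipartite_expander_def by auto
    moreover have "real M * (2 * A - real D) * real ?s \<le> real M * (real D * L\<^sup>2)"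
      using l2 l2_norm_sq_le_linf_norm[of "M * D" v] unfolding L_def by (simp add: mult_ac)
    ultimately have "(2 * A - real D) * real ?s \<le> L\<^sup>2 * real D"
      by (simp add: mult.assoc mult.commute[of _ "real D"])
    with \<open>0 < D\<close> show ?thesis by (simp add: pos_divide_le_eq)
  next
    case True
    then show ?thesis by (elim disjE) simp_all
  qed
  then have "sqrt ((2 * A - real D) / real D * real ?s) \<le> sqrt (L\<^sup>2)"
    by (rule real_sqrt_le_mono)
  also have "\<dots> = L" unfolding L_def by (simp add: linf_norm_nonneg)
  finally show ?thesis using l2 unfolding v_def L_def by simp
qed

end
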